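(* Let $p,q\in\mathbb{C}$ and consider the system of difference equations ($m\mathcal{H}1$) $$u_2=v+t\frac{p-q}{s-t},\qquad v_1=u+s\frac{p-q}{s-t},\qquad s_2=\frac{1}{t}+\frac{p-q}{t(u-v)},\qquad t_1=\frac{1}{s}+\frac{p-q}{s(u-v)}.$$ Then: (1) the system implies $\dfrac{s_2}{t_1}=\dfrac{s}{t}$ and $u_2-v_1+\dfrac{p-q}{2}=-\Big(u-v+\dfrac{p-q}{2}\Big)$; (2) for solutions of the system, $tu=sv$ holds if and only if $u_2s_2=t_1v_1$ holds; (3) the system extends to multi-dimensions as $$X^i_j=X^j+Y^j\frac{p^i-p^j}{Y^i-Y^j},\qquad Y^i_j=\frac{1}{Y^j}+\frac{1}{Y^j}\,\frac{p^i-p^j}{X^i-X^j},\qquad i\neq j\in\{1,\dots,n\},$$ and this extended system is multi-dimensionally compatible, i.e. $X^i_{jk}=X^i_{kj}$ and $Y^i_{jk}=Y^i_{kj}$ for all pairwise distinct $i,j,k$; (4) the system arises as the compatibility condition $$L(u_2,s_2;p,\lambda)\,L(v,t;q,\lambda)=L(v_1,t_1;q,\lambda)\,L(u,s;p,\lambda)\quad(\text{for all }\lambda)$$ of the linear system $\Psi_1=L(u,s;p,\lambda)\Psi$, $\Psi_2=L(v,t;q,\lambda)\Psi$, where $$L(u,s;p,\lambda)=\begin{pmatrix}0&0&-u&s(u+p-\lambda)\\0&0&-1&s\\-1&u+p-\lambda&0&0\\-s&su&0&0\end{pmatrix};$$ (5) the companion map $\phi^c:(u,s,v_1,t_1)\mapsto(u_2,s_2,v,t)$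 is a Yang–Baxter map.
   Context: Setting on the $\mathbb{Z}^2$ graph: $u,s$ are complex functions on horizontal edges $\{(m,n),(m+1,n)\}$ and $v,t$ on vertical edges $\{(m,n),(m,n+1)\}$ (each edge labelled by its initial vertex). For an elementary square with lower-left vertex $(m,n)$, $u,s$ are the values on its bottom edge, $v,t$ on its left edge, $u_2,s_2$ on its top edge and $v_1,t_1$ on its right edge; $p$ depends only on $m$ and $q$ only on $n$. In the multi-component notation, $X^i,Y^i$ are functions on the edges of $\mathbb{Z}^n$ parallel to the $i$-th coordinate direction, $p^i$ is a parameter attached to direction $i$ (depending only on the $i$-th coordinate), a subscript $j$ denotes the unit shift in direction $j$, and $X^1=u,Y^1=s,X^2=v,Y^2=t,p^1=p,p^2=q$. Multi-dimensional compatibility means that computing $X^i_{jk},Y^i_{jk}$ from the system by shifting first in direction $j$ then in direction $k$ gives identically the same rational expressions as shifting first in $k$ then in $j$. The system defines (for fixed $p,q$) a map $\phi:(u,s,v,t)\mapsto(u_2,s_2,v_1,t_1)$; its companion map is $\phi^c:(u,s,v_1,t_1)\mapsto(u_2,s_2,v,t)$, obtained by solving the system for $(u_2,s_2,v,t)$. A map $R:(x_i,y_i,\alpha_i;x_j,y_j,\alpha_j)\mapsto(x_i',y_i',\alpha_i;x_j',y_j',\alpha_j)$ (parameters $\alpha$ carried along unchanged) is a Yang–Baxter map if $R_{12}R_{13}R_{23}=R_{23}R_{13}R_{12}$ as maps on triples, where $R_{ij}$ acts as $R$ on the $i$-th and $j$-th factors and as identity on the remaining one. *)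

theory Defs
  imports Complex_Main "Jordan_Normal_Form.Matrix"
begin

definition mH1 :: "complex \<Rightarrow> complex \<Rightarrow> complex \<Rightarrow> complex \<Rightarrow> complex \<Rightarrow> complex
    \<Rightarrow> complex \<times> complex \<times> complex \<times> complex" where
  "mH1 p q u s v t =
     (v + t * (p - q) / (s - t),
      1 / t + (p - q) / (t * (u - v)),
      u + s * (p - q) / (s - t),
      1 / s + (p - q) / (s * (u - v)))"

definition mH1_generic :: "complex \<Rightarrow> complex \<Rightarrow> complex \<Rightarrow> complex \<Rightarrow> bool" where
  "mH1_generic u s v t \<longleftrightarrow> s \<noteq> t \<and> u \<noteq> v \<and> s \<noteq> 0 \<and> t \<noteq> 0"

text \<open>X i, Y i: values of X^i, Y^i at the current vertex; P i = p^i.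
  The shift of X^i, Y^i in direction j (i \<noteq> j).\<close>
definition shiftX :: "(nat \<Rightarrow> complex) \<Rightarrow> (nat \<Rightarrow> complex) \<Rightarrow> (nat \<Rightarrow> complex) \<Rightarrow> nat \<Rightarrow> nat \<Rightarrow> complex" where
  "shiftX X Y P i j = X j + Y j * (P i - P j) / (Y i - Y j)"

definition shiftY :: "(nat \<Rightarrow> complex) \<Rightarrow> (nat \<Rightarrow> complex) \<Rightarrow> (nat \<Rightarrow> complex) \<Rightarrow> nat \<Rightarrow> nat \<Rightarrow> complex" where
  "shiftY X Y P i j = 1 / Y j + (1 / Y j) * (P i - P j) / (X i - X j)"

text \<open>Fields shifted once in direction j (only meaningful at components \<noteq> j).\<close>
definition shX :: "(nat \<Rightarrow> complex) \<Rightarrow> (nat \<Rightarrow> complex) \<Rightarrow> (nat \<Rightarrow> complex) \<Rightarrow> nat \<Rightarrow> nat \<Rightarrow> complex" where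
  "shX X Y P j = (\<lambda>a. shiftX X Y P a j)"

definition shY :: "(nat \<Rightarrow> complex) \<Rightarrow> (nat \<Rightarrow> complex) \<Rightarrow> (nat \<Rightarrow> complex) \<Rightarrow> nat \<Rightarrow> nat \<Rightarrow> complex" where
  "shY X Y P j = (\<lambda>a. shiftY X Y P a j)"

text \<open>X^i_{jk}: shift first in direction j, then in direction k.\<close>
definition Xjk :: "(nat \<Rightarrow> complex) \<Rightarrow> (nat \<Rightarrow> complex) \<Rightarrow> (nat \<Rightarrow> complex) \<Rightarrow> nat \<Rightarrow> nat \<Rightarrow> nat \<Rightarrow> complex" where
  "Xjk X Y P i j k = shiftX (shX X Y P j) (shY X Y P j) P i k"

definition Yjk :: "(nat \<Rightarrow> complex) \<Rightarrow> (nat \<Rightarrow> complex) \<Rightarrow> (nat \<Rightarrow> complex) \<Rightarrow> nat \<Rightarrow> nat \<Rightarrow> nat \<Rightarrow> complex" where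
  "Yjk X Y P i j k = shiftY (shX X Y P j) (shY X Y P j) P i k"

definition pair_generic :: "(nat \<Rightarrow> complex) \<Rightarrow> (nat \<Rightarrow> complex) \<Rightarrow> nat \<Rightarrow> nat \<Rightarrow> bool" where
  "pair_generic X Y a b \<longleftrightarrow> X a \<noteq> X b \<and> Y a \<noteq> Y b \<and> Y a \<noteq> 0 \<and> Y b \<noteq> 0"

definition cube_generic :: "(nat \<Rightarrow> complex) \<Rightarrow> (nat \<Rightarrow> complex) \<Rightarrow> (nat \<Rightarrow> complex) \<Rightarrow> nat \<Rightarrow> nat \<Rightarrow> nat \<Rightarrow> bool" where
  "cube_generic X Y P i j k \<longleftrightarrow>
     pair_generic X Y i j \<and> pair_generic X Y i k \<and> pair_generic X Y j k \<and>
     pair_generic (shX X Y P j) (shY X Y P j) i k \<and>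
     pair_generic (shX X Y P k) (shY X Y P k) i j"

definition Lax :: "complex \<Rightarrow> complex \<Rightarrow> complex \<Rightarrow> complex \<Rightarrow> complex mat" where
  "Lax u s p lam = mat_of_rows_list 4
     [[0, 0, -u, s * (u + p - lam)],
      [0, 0, -1, s],
      [-1, u + p - lam, 0, 0],
      [-s, s * u, 0, 0]]"

text \<open>phi^c: (u,s,v1,t1) to (u2,s2,v,t), obtained by solving the system
  for (u2,s2,v,t) (explicit solution; part (5a) of the theorem certifies it).\<close>
definition companion :: "complex \<Rightarrow> complex \<Rightarrow> complex \<Rightarrow> complex \<Rightarrow> complex \<Rightarrow> complex
    \<Rightarrow> complex \<times> complex \<times> complex \<times> complex" where
  "companion p q u s v1 t1 =
     (v1 - (p - q) * s * t1 / (s * t1 - 1),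
      t1 * (v1 - u) / (v1 - u - p + q),
      u - (p - q) / (s * t1 - 1),
      s * (v1 - u - p + q) / (v1 - u))"

definition companion_generic :: "complex \<Rightarrow> complex \<Rightarrow> complex \<Rightarrow> complex \<Rightarrow> complex \<Rightarrow> complex \<Rightarrow> bool" where
  "companion_generic p q u s v1 t1 \<longleftrightarrow>
     p \<noteq> q \<and> s \<noteq> 0 \<and> t1 \<noteq> 0 \<and> s * t1 \<noteq> 1 \<and> v1 \<noteq> u \<and> v1 - u - p + q \<noteq> 0"

definition Rc :: "complex \<Rightarrow> complex \<Rightarrow> complex \<times> complex \<Rightarrow> complex \<times> complex
    \<Rightarrow> (complex \<times> complex) \<times> (complex \<times> complex)" where
  "Rc a b z w = (case companion a b (fst z) (snd z) (fst w) (snd w) of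
                   (u2, s2, v, t) \<Rightarrow> ((u2, s2), (v, t)))"

definition Rc_generic :: "complex \<Rightarrow> complex \<Rightarrow> complex \<times> complex \<Rightarrow> complex \<times> complex \<Rightarrow> bool" where
  "Rc_generic a b z w \<longleftrightarrow> companion_generic a b (fst z) (snd z) (fst w) (snd w)"

type_synonym ('x, 'a) pmap = "'a \<Rightarrow> 'a \<Rightarrow> 'x \<Rightarrow> 'x \<Rightarrow> 'x \<times> 'x"

definition R12 :: "('x, 'a) pmap \<Rightarrow> 'a \<Rightarrow> 'a \<Rightarrow> 'a \<Rightarrow> 'x \<times> 'x \<times> 'x \<Rightarrow> 'x \<times> 'x \<times> 'x" where
  "R12 R a1 a2 a3 z = (case z of (z1, z2, z3) \<Rightarrow> (fst (R a1 a2 z1 z2), snd (R a1 a2 z1 z2), z3))"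

definition R13 :: "('x, 'a) pmap \<Rightarrow> 'a \<Rightarrow> 'a \<Rightarrow> 'a \<Rightarrow> 'x \<times> 'x \<times> 'x \<Rightarrow> 'x \<times> 'x \<times> 'x" where
  "R13 R a1 a2 a3 z = (case z of (z1, z2, z3) \<Rightarrow> (fst (R a1 a3 z1 z3), z2, snd (R a1 a3 z1 z3)))"

definition R23 :: "('x, 'a) pmap \<Rightarrow> 'a \<Rightarrow> 'a \<Rightarrow> 'a \<Rightarrow> 'x \<times> 'x \<times> 'x \<Rightarrow> 'x \<times> 'x \<times> 'x" where
  "R23 R a1 a2 a3 z = (case z of (z1, z2, z3) \<Rightarrow> (z1, fst (R a2 a3 z2 z3), snd (R a2 a3 z2 z3)))"

definition ok12 :: "('a \<Rightarrow> 'a \<Rightarrow> 'x \<Rightarrow> 'x \<Rightarrow> bool) \<Rightarrow> 'a \<Rightarrow> 'a \<Rightarrow> 'a \<Rightarrow> 'x \<times> 'x \<times> 'x \<Rightarrow> bool" where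
  "ok12 G a1 a2 a3 z = (case z of (z1, z2, z3) \<Rightarrow> G a1 a2 z1 z2)"
definition ok13 :: "('a \<Rightarrow> 'a \<Rightarrow> 'x \<Rightarrow> 'x \<Rightarrow> bool) \<Rightarrow> 'a \<Rightarrow> 'a \<Rightarrow> 'a \<Rightarrow> 'x \<times> 'x \<times> 'x \<Rightarrow> bool" where
  "ok13 G a1 a2 a3 z = (case z of (z1, z2, z3) \<Rightarrow> G a1 a3 z1 z3)"
definition ok23 :: "('a \<Rightarrow> 'a \<Rightarrow> 'x \<Rightarrow> 'x \<Rightarrow> bool) \<Rightarrow> 'a \<Rightarrow> 'a \<Rightarrow> 'a \<Rightarrow> 'x \<times> 'x \<times> 'x \<Rightarrow> bool" where
  "ok23 G a1 a2 a3 z = (case z of (z1, z2, z3) \<Rightarrow> G a2 a3 z2 z3)"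

definition yang_baxter :: "('x, 'a) pmap \<Rightarrow> ('a \<Rightarrow> 'a \<Rightarrow> 'x \<Rightarrow> 'x \<Rightarrow> bool) \<Rightarrow> bool" where
  "yang_baxter R G \<longleftrightarrow>
    (\<forall>a1 a2 a3 z.
       ok23 G a1 a2 a3 z \<and>
       ok13 G a1 a2 a3 (R23 R a1 a2 a3 z) \<and>
       ok12 G a1 a2 a3 (R13 R a1 a2 a3 (R23 R a1 a2 a3 z)) \<and>
       ok12 G a1 a2 a3 z \<and>
       ok13 G a1 a2 a3 (R12 R a1 a2 a3 z) \<and>
       ok23 G a1 a2 a3 (R13 R a1 a2 a3 (R12 R a1 a2 a3 z))
     \<longrightarrow> R12 R a1 a2 a3 (R13 R a1 a2 a3 (R23 R a1 a2 a3 z)) =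
         R23 R a1 a2 a3 (R13 R a1 a2 a3 (R12 R a1 a2 a3 z)))"

end

theory Submission
  imports Defs
begin

text \<open>All claims about the system are best checked on the polynomial relations obtained by
  clearing its denominators: where the denominators do not vanish these are equivalent to the
  system, they are exactly what the zero-curvature condition of the Lax pair yields entrywise,
  and solving them for \<open>(u\<^sub>2, s\<^sub>2, v, t)\<close> instead of \<open>(u\<^sub>2, s\<^sub>2, v\<^sub>1, t\<^sub>1)\<close> gives the companion
  map.  Multi-dimensional compatibility is a rational identity that becomes transparent once the
  differences \<open>Y\<^sup>i\<^sub>j - Y\<^sup>k\<^sub>j\<close> and \<open>X\<^sup>i\<^sub>j - X\<^sup>k\<^sub>j\<close> are factored.

  A step \<open>((x, X), (y, Y)) \<mapsto> ((x', X'), (y', Y'))\<close> of the companion map with parameters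
  \<open>a, b\<close> moves the positions by \<open>y' = x - e\<close> and \<open>x' = y - (a - b) - e\<close>, with the shift
  \<open>e = (a - b) / (X Y - 1)\<close>, rescales the amplitudes by the ratio of \<open>y - x\<close> and
  \<open>x' - y' = y - x - (a - b)\<close>, and preserves the product \<open>X Y\<close>.  On the two sides of the
  Yang--Baxter equation the positions agree because the shifts add up (the shift of the
  \<open>R\<^sub>1\<^sub>3\<close>-step on one side is the sum of the shifts of the \<open>R\<^sub>1\<^sub>2\<close>- and \<open>R\<^sub>2\<^sub>3\<close>-steps on the
  other), the amplitudes of the outer particles agree because the ratios multiply, and the
  middle amplitude then follows from the conservation of \<open>X\<^sub>1 X\<^sub>2 X\<^sub>3\<close>.\<close>

section \<open>Polynomial form of the system\<close>

definition mH1_rel :: "complex \<Rightarrow> complex \<Rightarrow> complex \<Rightarrow> complex \<Rightarrow> complex \<Rightarrow> complex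
    \<Rightarrow> complex \<Rightarrow> complex \<Rightarrow> complex \<Rightarrow> complex \<Rightarrow> bool" where
  "mH1_rel p q u s v t u2 s2 v1 t1 \<longleftrightarrow>
     s2 * t = t1 * s \<and> t1 * s * (u - v) = u - v + (p - q) \<and>
     u2 - v1 = v - u - (p - q) \<and> (u2 - v) * (s - t) = t * (p - q)"

lemma mH1_eq_iff_rel:
  assumes "mH1_generic u s v t"
  shows "(u2, s2, v1, t1) = mH1 p q u s v t \<longleftrightarrow> mH1_rel p q u s v t u2 s2 v1 t1"
proof -
  have nz: "s - t \<noteq> 0" "u - v \<noteq> 0" "s \<noteq> 0" "t \<noteq> 0"
    using assms unfolding mH1_generic_def by auto
  have "mH1 p q u s v t = ((v * (s - t) + t * (p - q)) / (s - t), (u - v + (p - q)) / (t * (u - v)),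
      (u * (s - t) + s * (p - q)) / (s - t), (u - v + (p - q)) / (s * (u - v)))"
    unfolding mH1_def using nz by (simp add: field_simps)
  then have "(u2, s2, v1, t1) = mH1 p q u s v t \<longleftrightarrow>
      u2 * (s - t) = v * (s - t) + t * (p - q) \<and> s2 * (t * (u - v)) = u - v + (p - q) \<and>
      v1 * (s - t) = u * (s - t) + s * (p - q) \<and> t1 * (s * (u - v)) = u - v + (p - q)"
    using nz by (simp add: nonzero_eq_divide_eq)
  also have "\<dots> \<longleftrightarrow> mH1_rel p q u s v t u2 s2 v1 t1"
    unfolding mH1_rel_def
    by (insert nz, rule iffI; elim conjE; intro conjI; Groebner_Basis.algebra)
  finally show ?thesis .
qed

lemma mH1_rel_ratio:
  assumes "mH1_rel p q u s v t u2 s2 v1 t1" "t \<noteq> 0" "t1 \<noteq> 0"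
  shows "s2 / t1 = s / t"
  using assms unfolding mH1_rel_def by (auto simp: field_simps)

lemma mH1_rel_sum:
  assumes "mH1_rel p q u s v t u2 s2 v1 t1"
  shows "u2 - v1 + (p - q) / 2 = - (u - v + (p - q) / 2)"
proof -
  have "u2 - v1 = v - u - (p - q)"
    using assms unfolding mH1_rel_def by simp
  then show ?thesis unfolding \<open>u2 - v1 = v - u - (p - q)\<close> by (simp add: field_simps)
qed

lemma mH1_rel_constraint_transport:
  assumes "mH1_rel p q u s v t u2 s2 v1 t1"
  shows "s * t * (u2 * s2 - t1 * v1) = s2 * t * (s * v - t * u)"
  using assms unfolding mH1_rel_def by (elim conjE) Groebner_Basis.algebra

lemma mH1_rel_constraint_iff:
  assumes "mH1_rel p q u s v t u2 s2 v1 t1" "s \<noteq> 0" "t \<noteq> 0" "t1 \<noteq> 0"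
  shows "t * u = s * v \<longleftrightarrow> u2 * s2 = t1 * v1"
proof -
  have "s * t \<noteq> 0" "s2 * t \<noteq> 0" using assms unfolding mH1_rel_def by simp_all
  then have "u2 * s2 - t1 * v1 = 0 \<longleftrightarrow> s * v - t * u = 0"
    using mH1_rel_constraint_transport[OF assms(1)] by auto
  then show ?thesis by auto
qed

section \<open>Lax pair\<close>

lemma mat_of_rows_list_4_eq_iff:
  "mat_of_rows_list 4 [[a11, a12, a13, a14], [a21, a22, a23, a24], [a31, a32, a33, a34], [a41, a42, a43, a44]] =
   mat_of_rows_list 4 [[b11, b12, b13, b14], [b21, b22, b23, b24], [b31, b32, b33, b34], [b41, b42, b43, b44]]
   \<longleftrightarrow> a11 = b11 \<and> a12 = b12 \<and> a13 = b13 \<and> a14 = b14 \<and> a21 = b21 \<and> a22 = b22 \<and> a23 = b23 \<and> a24 = b24 \<and>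
     a31 = b31 \<and> a32 = b32 \<and> a33 = b33 \<and> a34 = b34 \<and> a41 = b41 \<and> a42 = b42 \<and> a43 = b43 \<and> a44 = b44"
  (is "?A = ?B \<longleftrightarrow> _")
proof
  assume "?A = ?B"
  then have "\<And>i j. ?A $$ (i, j) = ?B $$ (i, j)" by simp
  from this[of 0 0] this[of 0 1] this[of 0 2] this[of 0 3] this[of 1 0] this[of 1 1] this[of 1 2]
    this[of 1 3] this[of 2 0] this[of 2 1] this[of 2 2] this[of 2 3] this[of 3 0] this[of 3 1]
    this[of 3 2] this[of 3 3]
  show "a11 = b11 \<and> a12 = b12 \<and> a13 = b13 \<and> a14 = b14 \<and> a21 = b21 \<and> a22 = b22 \<and> a23 = b23 \<and>
    a24 = b24 \<and> a31 = b31 \<and> a32 = b32 \<and> a33 = b33 \<and> a34 = b34 \<and> a41 = b41 \<and> a42 = b42 \<and>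
    a43 = b43 \<and> a44 = b44"
    by (simp add: mat_of_rows_list_def)
qed simp

lemma Lax_mult:
  "Lax u s p lam * Lax v t q lam = mat_of_rows_list 4
    [[u - s * (u + p - lam) * t, - u * (v + q - lam) + s * (u + p - lam) * t * v, 0, 0],
     [1 - s * t, - (v + q - lam) + s * t * v, 0, 0],
     [0, 0, v - (u + p - lam), - t * (v + q - lam) + (u + p - lam) * t],
     [0, 0, s * v - s * u, - s * t * (v + q - lam) + s * u * t]]"
  unfolding Lax_def
  by (rule eq_matI)
    (auto simp: mat_of_rows_list_def scalar_prod_def less_Suc_eq numeral_eq_Suc row_def col_def)

lemma Lax_commute_imp_mH1_rel:
  assumes "Lax u2 s2 p lam * Lax v t q lam = Lax v1 t1 q lam * Lax u s p lam"
  shows "mH1_rel p q u s v t u2 s2 v1 t1"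
proof -
  have "s2 * t = t1 * s" "- (v + q - lam) + s2 * t * v = - (u + p - lam) + t1 * s * u"
    "v - (u2 + p - lam) = u - (v1 + q - lam)"
    "- t * (v + q - lam) + (u2 + p - lam) * t = - s * (u + p - lam) + (v1 + q - lam) * s"
    using assms unfolding Lax_mult mat_of_rows_list_4_eq_iff by auto
  then show ?thesis unfolding mH1_rel_def by (auto simp: algebra_simps) Groebner_Basis.algebra
qed

lemma mH1_rel_imp_Lax_commute:
  assumes "mH1_rel p q u s v t u2 s2 v1 t1" "s \<noteq> 0" "t \<noteq> 0"
  shows "Lax u2 s2 p lam * Lax v t q lam = Lax v1 t1 q lam * Lax u s p lam"
proof -
  have s2: "s2 = t1 * s / t" and v1: "v1 = u2 - v + u + (p - q)"
    using assms unfolding mH1_rel_def by (auto simp: field_simps)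
  have "t1 * s * (u - v) = u - v + (p - q)" "(u2 - v) * (s - t) = t * (p - q)"
    using assms(1) unfolding mH1_rel_def by auto
  then show ?thesis unfolding Lax_mult mat_of_rows_list_4_eq_iff s2 v1 using assms(2,3)
    by (simp add: field_simps) (intro conjI; Groebner_Basis.algebra)
qed

lemma Lax_commute_iff_mH1_rel:
  assumes "s \<noteq> 0" "t \<noteq> 0"
  shows "(\<forall>lam. Lax u2 s2 p lam * Lax v t q lam = Lax v1 t1 q lam * Lax u s p lam)
    \<longleftrightarrow> mH1_rel p q u s v t u2 s2 v1 t1"
proof
  assume "\<forall>lam. Lax u2 s2 p lam * Lax v t q lam = Lax v1 t1 q lam * Lax u s p lam"
  then show "mH1_rel p q u s v t u2 s2 v1 t1" using Lax_commute_imp_mH1_rel by blast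
next
  assume "mH1_rel p q u s v t u2 s2 v1 t1"
  then show "\<forall>lam. Lax u2 s2 p lam * Lax v t q lam = Lax v1 t1 q lam * Lax u s p lam"
    using mH1_rel_imp_Lax_commute assms by blast
qed

section \<open>Multi-dimensional consistency\<close>

lemma shiftY_eq:
  assumes "X i \<noteq> X j" "Y j \<noteq> 0"
  shows "shiftY X Y P i j = (X i - X j + (P i - P j)) / (Y j * (X i - X j))"
  using assms unfolding shiftY_def by (simp add: field_simps)

lemma shiftY_diff:
  assumes "X i \<noteq> X j" "X k \<noteq> X j" "Y j \<noteq> 0"
  shows "shiftY X Y P i j - shiftY X Y P k j =
    ((P i - P j) * (X k - X j) - (P k - P j) * (X i - X j)) / (Y j * (X i - X j) * (X k - X j))"
proof -
  have "X i - X j \<noteq> 0" "X k - X j \<noteq> 0" using assms by auto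
  then show ?thesis unfolding shiftY_def using assms(3)
    by (simp add: divide_simps) (simp add: algebra_simps)
qed

lemma shiftX_diff:
  assumes "Y i \<noteq> Y j" "Y k \<noteq> Y j"
  shows "shiftX X Y P i j - shiftX X Y P k j =
    Y j * ((P i - P j) * (Y k - Y j) - (P k - P j) * (Y i - Y j)) / ((Y i - Y j) * (Y k - Y j))"
proof -
  have "Y i - Y j \<noteq> 0" "Y k - Y j \<noteq> 0" using assms by auto
  then show ?thesis unfolding shiftX_def
    by (simp add: divide_simps) (simp add: algebra_simps)
qed

lemma Xjk_commute:
  assumes "cube_generic X Y P i j k"
  shows "Xjk X Y P i j k = Xjk X Y P i k j"
proof -
  note g = assms[unfolded cube_generic_def pair_generic_def shX_def shY_def]
  define N1 where "N1 = (P i - P j) * (X k - X j) - (P k - P j) * (X i - X j)"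
  define N2 where "N2 = (P i - P k) * (X j - X k) - (P j - P k) * (X i - X k)"
  have d1: "shiftY X Y P i j - shiftY X Y P k j = N1 / (Y j * (X i - X j) * (X k - X j))"
    unfolding N1_def by (rule shiftY_diff) (use g in auto)
  have d2: "shiftY X Y P i k - shiftY X Y P j k = N2 / (Y k * (X i - X k) * (X j - X k))"
    unfolding N2_def by (rule shiftY_diff) (use g in auto)
  have "N1 \<noteq> 0" "N2 \<noteq> 0" using d1 d2 g by auto
  moreover have "X i - X j \<noteq> 0" "X i - X k \<noteq> 0" "X j - X k \<noteq> 0" "X k - X j \<noteq> 0"
    "Y k - Y j \<noteq> 0" "Y j - Y k \<noteq> 0"
    using g by auto
  ultimately show ?thesis
    unfolding Xjk_def shiftX_def[of _ _ _ i] shX_def shY_def d1 d2 using g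
    by (simp add: shiftY_eq shiftX_def divide_simps) (simp add: N1_def N2_def algebra_simps)
qed

lemma Yjk_commute:
  assumes "cube_generic X Y P i j k"
  shows "Yjk X Y P i j k = Yjk X Y P i k j"
proof -
  note g = assms[unfolded cube_generic_def pair_generic_def shX_def shY_def]
  define N1 where "N1 = (P i - P j) * (Y k - Y j) - (P k - P j) * (Y i - Y j)"
  define N2 where "N2 = (P i - P k) * (Y j - Y k) - (P j - P k) * (Y i - Y k)"
  have d1: "shiftX X Y P i j - shiftX X Y P k j = Y j * N1 / ((Y i - Y j) * (Y k - Y j))"
    unfolding N1_def by (rule shiftX_diff) (use g in auto)
  have d2: "shiftX X Y P i k - shiftX X Y P j k = Y k * N2 / ((Y i - Y k) * (Y j - Y k))"
    unfolding N2_def by (rule shiftX_diff) (use g in auto)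
  have "N1 \<noteq> 0" "N2 \<noteq> 0" using d1 d2 g by auto
  moreover have "shiftY X Y P k j \<noteq> 0" "shiftY X Y P j k \<noteq> 0" using g by auto
  moreover have "X i - X j \<noteq> 0" "X i - X k \<noteq> 0" "X j - X k \<noteq> 0" "X k - X j \<noteq> 0"
    "Y i - Y j \<noteq> 0" "Y i - Y k \<noteq> 0" "Y k - Y j \<noteq> 0" "Y j - Y k \<noteq> 0"
    using g by auto
  ultimately show ?thesis
    unfolding Yjk_def shiftY_def[of _ _ _ i] shX_def shY_def d1 d2 using g
    by (simp add: shiftY_eq divide_simps) (simp add: N1_def N2_def algebra_simps)
qed

lemma mH1_as_shifts:
  "mH1 p q u s v t =
    (shiftX (\<lambda>a. if a = 1 then u else v) (\<lambda>a. if a = 1 then s else t) (\<lambda>a. if a = 1 then p else q) 1 2,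
     shiftY (\<lambda>a. if a = 1 then u else v) (\<lambda>a. if a = 1 then s else t) (\<lambda>a. if a = 1 then p else q) 1 2,
     shiftX (\<lambda>a. if a = 1 then u else v) (\<lambda>a. if a = 1 then s else t) (\<lambda>a. if a = 1 then p else q) 2 1,
     shiftY (\<lambda>a. if a = 1 then u else v) (\<lambda>a. if a = 1 then s else t) (\<lambda>a. if a = 1 then p else q) 2 1)"
proof -
  have "(q - p) / (t - s) = (p - q) / (s - t)" "(q - p) / (v - u) = (p - q) / (u - v)"
    "(q - p) / (s * (v - u)) = (p - q) / (s * (u - v))"
    by (metis minus_diff_eq minus_divide_divide mult_minus_right)+
  then show ?thesis unfolding mH1_def shiftX_def shiftY_def
    by (simp add: times_divide_eq_right[symmetric] del: times_divide_eq_right)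
qed

section \<open>Companion map\<close>

lemma companion_eq_iff_mH1_rel:
  assumes "companion_generic p q u s v1 t1"
  shows "(u2, s2, v, t) = companion p q u s v1 t1 \<longleftrightarrow> mH1_rel p q u s v t u2 s2 v1 t1"
proof -
  have nz: "p - q \<noteq> 0" "s \<noteq> 0" "t1 \<noteq> 0" "s * t1 - 1 \<noteq> 0" "v1 - u \<noteq> 0" "v1 - u - p + q \<noteq> 0"
    using assms unfolding companion_generic_def by auto
  have "companion p q u s v1 t1 = ((v1 * (s * t1 - 1) - (p - q) * s * t1) / (s * t1 - 1),
      t1 * (v1 - u) / (v1 - u - p + q), (u * (s * t1 - 1) - (p - q)) / (s * t1 - 1),
      s * (v1 - u - p + q) / (v1 - u))"
    unfolding companion_def using nz by (simp add: field_simps)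
  then have "(u2, s2, v, t) = companion p q u s v1 t1 \<longleftrightarrow>
      u2 * (s * t1 - 1) = v1 * (s * t1 - 1) - (p - q) * s * t1 \<and>
      s2 * (v1 - u - p + q) = t1 * (v1 - u) \<and>
      v * (s * t1 - 1) = u * (s * t1 - 1) - (p - q) \<and> t * (v1 - u) = s * (v1 - u - p + q)"
    using nz by (simp add: nonzero_eq_divide_eq)
  also have "\<dots> \<longleftrightarrow> mH1_rel p q u s v t u2 s2 v1 t1"
    unfolding mH1_rel_def by (insert nz, rule iffI; elim conjE; intro conjI; Groebner_Basis.algebra)
  finally show ?thesis .
qed

lemma companion_generic_mH1_rel_imp_generic:
  assumes "companion_generic p q u s v1 t1" "mH1_rel p q u s v t u2 s2 v1 t1"
  shows "mH1_generic u s v t"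
proof -
  have "(u - v) * (s * t1 - 1) = p - q" "(v1 - u) * (s - t) = s * (p - q)"
    "t * (v1 - u) = s * (v1 - u - (p - q))"
    using assms(2) unfolding mH1_rel_def by (elim conjE; Groebner_Basis.algebra)+
  then show ?thesis using assms(1) unfolding mH1_generic_def companion_generic_def by auto
qed

lemma companion_iff_mH1:
  assumes "companion_generic p q u s v1 t1"
  shows "mH1_generic u s v t \<and> (u2, s2, v1, t1) = mH1 p q u s v t
    \<longleftrightarrow> (u2, s2, v, t) = companion p q u s v1 t1"
  using mH1_eq_iff_rel companion_eq_iff_mH1_rel[OF assms]
    companion_generic_mH1_rel_imp_generic[OF assms] by blast

section \<open>Yang--Baxter property of the companion map\<close>

definition companion_step :: "complex \<Rightarrow> complex \<Rightarrow> complex \<Rightarrow> complex \<Rightarrow> complex \<Rightarrow> complex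
    \<Rightarrow> complex \<Rightarrow> complex \<Rightarrow> complex \<Rightarrow> complex \<Rightarrow> bool" where
  "companion_step a b x X y Y x' X' y' Y' \<longleftrightarrow> companion_generic a b x X y Y \<and>
     (x - y') * (X * Y - 1) = a - b \<and> x' - y' = y - x - (a - b) \<and>
     X' * (x' - y') = Y * (y - x) \<and> Y' * (y - x) = X * (x' - y')"

lemma Rc_companion_step:
  assumes "Rc_generic a b (x, X) (y, Y)" "Rc a b (x, X) (y, Y) = ((x', X'), (y', Y'))"
  shows "companion_step a b x X y Y x' X' y' Y'"
proof -
  have gen: "companion_generic a b x X y Y" using assms(1) by (simp add: Rc_generic_def)
  then have "X \<noteq> 0" by (simp add: companion_generic_def)
  have "(x', X', y', Y') = companion a b x X y Y"
    using assms(2) by (simp add: Rc_def split: prod.splits)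
  then have "mH1_rel a b x X y' Y' x' X' y Y"
    using companion_eq_iff_mH1_rel[OF gen] by simp
  then have rel: "X' * Y' = Y * X" "Y * X * (x - y') = x - y' + (a - b)"
      "x' - y = y' - x - (a - b)" "(x' - y') * (X - Y') = Y' * (a - b)"
    by (simp_all add: mH1_rel_def)
  then have gap: "x' - y' = y - x - (a - b)" by (simp add: algebra_simps)
  have shift: "(x - y') * (X * Y - 1) = a - b" using rel(2) by (simp add: algebra_simps)
  have snd: "Y' * (y - x) = X * (x' - y')" using rel(4) gap by Groebner_Basis.algebra
  have "X * (X' * (x' - y')) = X * (Y * (y - x))" using rel(1) snd by Groebner_Basis.algebra
  then have "X' * (x' - y') = Y * (y - x)" using \<open>X \<noteq> 0\<close> by simp
  then show ?thesis unfolding companion_step_def using gen shift gap snd by blast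
qed

lemma companion_step_shift:
  "companion_step a b x X y Y x' X' y' Y' \<Longrightarrow> (x - y') * (X * Y - 1) = a - b"
  and companion_step_gap:
  "companion_step a b x X y Y x' X' y' Y' \<Longrightarrow> x' - y' = y - x - (a - b)"
  and companion_step_fst:
  "companion_step a b x X y Y x' X' y' Y' \<Longrightarrow> X' * (x' - y') = Y * (y - x)"
  and companion_step_snd:
  "companion_step a b x X y Y x' X' y' Y' \<Longrightarrow> Y' * (y - x) = X * (x' - y')"
  unfolding companion_step_def by blast+

lemma companion_step_nonzero:
  assumes "companion_step a b x X y Y x' X' y' Y'"
  shows "X \<noteq> 0" "Y \<noteq> 0" "X * Y \<noteq> 1" "y - x \<noteq> 0" "x' - y' \<noteq> 0" "X' \<noteq> 0" "Y' \<noteq> 0"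
proof -
  show "X \<noteq> 0" "Y \<noteq> 0" "X * Y \<noteq> 1" "y - x \<noteq> 0" and gap: "x' - y' \<noteq> 0"
    using assms by (auto simp: companion_step_def companion_generic_def algebra_simps)
  then show "X' \<noteq> 0" "Y' \<noteq> 0"
    using companion_step_fst[OF assms] companion_step_snd[OF assms] by auto
qed

lemma companion_step_product:
  assumes "companion_step a b x X y Y x' X' y' Y'"
  shows "X' * Y' = X * Y"
proof -
  have "(y - x) * (x' - y') * (X' * Y') = (y - x) * (x' - y') * (X * Y)"
    using companion_step_fst[OF assms] companion_step_snd[OF assms] by Groebner_Basis.algebra
  then show ?thesis using companion_step_nonzero[OF assms] by simp
qed

text \<open>The identities behind the agreement of the components \<open>x\<^sub>3, x\<^sub>1, X\<^sub>3, X\<^sub>1\<close> of the two sides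
  of the Yang--Baxter equation, in the notation of the context below: \<open>eS\<close> is the shift and \<open>PS\<close>
  the amplitude product of step \<open>S\<close>, \<open>P = X\<^sub>1 X\<^sub>2\<close>, \<open>Q = X\<^sub>2 X\<^sub>3\<close>, \<open>\<alpha> = a\<^sub>1 - a\<^sub>2\<close>,
  \<open>\<beta> = a\<^sub>2 - a\<^sub>3\<close>.\<close>

lemma yb_identity_x3:
  fixes \<alpha> \<beta> P PB PG d dF eB eE eG :: "'a::field"
  assumes eE: "eE * (P - 1) = \<alpha>" and dF: "dF = d + \<alpha> + eE"
    and PB: "PB * d = P * (d - \<beta>)" and eB: "eB * (PB - 1) = \<alpha> + \<beta>"
    and PG: "PG * dF = P * (dF - (\<alpha> + \<beta>))" and eG: "eG * (PG - 1) = \<beta>"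
    and "PB \<noteq> 1" "d \<noteq> 0"
  shows "eB = eE + eG"
proof -
  define \<Delta> where "\<Delta> = (PB - 1) * d"
  have "\<Delta> \<noteq> 0" using \<open>PB \<noteq> 1\<close> \<open>d \<noteq> 0\<close> by (simp add: \<Delta>_def)
  have "eB * \<Delta> = (\<alpha> + \<beta>) * d" using eB by (simp add: \<Delta>_def)
  \<comment> \<open>the shifts \<open>eB\<close> and \<open>eG\<close> share their denominator\<close>
  moreover have "(PG - 1) * dF = \<Delta>"
    using PB PG eE unfolding \<Delta>_def dF by Groebner_Basis.algebra
  then have "eG * \<Delta> = \<beta> * dF" using eG by (metis mult.assoc)
  ultimately have "(eE + eG) * \<Delta> = eB * \<Delta>"
    using PB eE unfolding \<Delta>_def dF by Groebner_Basis.algebra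
  then show ?thesis using \<open>\<Delta> \<noteq> 0\<close> by simp
qed

lemma yb_identity_x1:
  fixes \<alpha> \<beta> Q PC PF d eA eC eF :: "'a::field"
  assumes eA: "eA * (Q - 1) = \<beta>" and PC: "PC * (d - eA - (\<alpha> + \<beta>)) = Q * (d - eA)"
    and eC: "eC * (PC - 1) = \<alpha>"
    and PF: "PF * (d - \<alpha>) = Q * d" and eF: "eF * (PF - 1) = \<alpha> + \<beta>"
    and "PF \<noteq> 1" "d - \<alpha> \<noteq> 0"
  shows "eA + eC = eF"
proof -
  define \<Delta> where "\<Delta> = (PF - 1) * (d - \<alpha>)"
  have "\<Delta> \<noteq> 0" using \<open>PF \<noteq> 1\<close> \<open>d - \<alpha> \<noteq> 0\<close> by (simp add: \<Delta>_def)
  have "eF * \<Delta> = (\<alpha> + \<beta>) * (d - \<alpha>)" using eF by (simp add: \<Delta>_def)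
  \<comment> \<open>the shifts \<open>eC\<close> and \<open>eF\<close> share their denominator\<close>
  moreover have "(PC - 1) * (d - eA - (\<alpha> + \<beta>)) = \<Delta>"
    using PC PF eA unfolding \<Delta>_def by Groebner_Basis.algebra
  then have "eC * \<Delta> = \<alpha> * (d - eA - (\<alpha> + \<beta>))" using eC by (metis mult.assoc)
  ultimately have "(eA + eC) * \<Delta> = eF * \<Delta>"
    using PF eA unfolding \<Delta>_def by Groebner_Basis.algebra
  then show ?thesis using \<open>\<Delta> \<noteq> 0\<close> by simp
qed

lemma yb_identity_X3:
  fixes \<alpha> \<beta> Q PF d eA eF :: "'a::field"
  assumes eA: "eA * (Q - 1) = \<beta>" and PF: "PF * (d - \<alpha>) = Q * d" and eF: "eF * (PF - 1) = \<alpha> + \<beta>"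
    and "Q \<noteq> 1" "PF \<noteq> 1" "d - \<alpha> \<noteq> 0"
  shows "(d - eA - (\<alpha> + \<beta>)) * d * (d - \<alpha> - eF) = (d - eA) * (d - \<alpha>) * (d - \<alpha> - eF - \<beta>)"
proof -
  define \<Delta> where "\<Delta> = (PF - 1) * (d - \<alpha>)"
  have "(Q - 1) * \<Delta> \<noteq> 0" using assms(4-) by (simp add: \<Delta>_def)
  have "eF * \<Delta> = (\<alpha> + \<beta>) * (d - \<alpha>)" using eF by (simp add: \<Delta>_def)
  then have "(Q - 1) * \<Delta> * ((d - eA - (\<alpha> + \<beta>)) * d * (d - \<alpha> - eF)) =
      (Q - 1) * \<Delta> * ((d - eA) * (d - \<alpha>) * (d - \<alpha> - eF - \<beta>))"
    using eA PF unfolding \<Delta>_def by Groebner_Basis.algebra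
  then show ?thesis using \<open>(Q - 1) * \<Delta> \<noteq> 0\<close> by simp
qed

lemma yb_identity_X1:
  fixes \<alpha> \<beta> P PB d eB eE :: "'a::field"
  assumes eE: "eE * (P - 1) = \<alpha>" and PB: "PB * d = P * (d - \<beta>)" and eB: "eB * (PB - 1) = \<alpha> + \<beta>"
    and "P \<noteq> 1" "PB \<noteq> 1" "d \<noteq> 0"
  shows "d * (d + \<alpha> + eB) * (d + eE - \<beta>) = (d + \<alpha> + eE) * (d - \<beta>) * (d + eB)"
proof -
  define \<Delta> where "\<Delta> = (PB - 1) * d"
  have "(P - 1) * \<Delta> \<noteq> 0" using assms(4-) by (simp add: \<Delta>_def)
  have "eB * \<Delta> = (\<alpha> + \<beta>) * d" using eB by (simp add: \<Delta>_def)
  then have "(P - 1) * \<Delta> * (d * (d + \<alpha> + eB) * (d + eE - \<beta>)) =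
      (P - 1) * \<Delta> * ((d + \<alpha> + eE) * (d - \<beta>) * (d + eB))"
    using eE PB unfolding \<Delta>_def by Groebner_Basis.algebra
  then show ?thesis using \<open>(P - 1) * \<Delta> \<noteq> 0\<close> by simp
qed

text \<open>Steps \<open>A\<close>, \<open>B\<close>, \<open>C\<close> are the applications of \<open>R\<^sub>2\<^sub>3\<close>, \<open>R\<^sub>1\<^sub>3\<close>, \<open>R\<^sub>1\<^sub>2\<close> in
  \<open>R\<^sub>1\<^sub>2 R\<^sub>1\<^sub>3 R\<^sub>2\<^sub>3\<close>, and \<open>E\<close>, \<open>F\<close>, \<open>G\<close> those of \<open>R\<^sub>1\<^sub>2\<close>, \<open>R\<^sub>1\<^sub>3\<close>, \<open>R\<^sub>2\<^sub>3\<close> in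
  \<open>R\<^sub>2\<^sub>3 R\<^sub>1\<^sub>3 R\<^sub>1\<^sub>2\<close>; the suffix of an intermediate value names the step producing it.\<close>

context
  fixes a1 a2 a3 x1 X1 x2 X2 x3 X3 x2a X2a x3a X3a x1b X1b x3b X3b x1c X1c x2c X2c
    x1e X1e x2e X2e x1f X1f x3f X3f x2g X2g x3g X3g :: complex
  assumes A: "companion_step a2 a3 x2 X2 x3 X3 x2a X2a x3a X3a"
    and B: "companion_step a1 a3 x1 X1 x3a X3a x1b X1b x3b X3b"
    and C: "companion_step a1 a2 x1b X1b x2a X2a x1c X1c x2c X2c"
    and E: "companion_step a1 a2 x1 X1 x2 X2 x1e X1e x2e X2e"
    and F: "companion_step a1 a3 x1e X1e x3 X3 x1f X1f x3f X3f"
    and G: "companion_step a2 a3 x2e X2e x3f X3f x2g X2g x3g X3g"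
begin

lemma yang_baxter_x3: "x3b = x3g"
proof -
  have "x1 - x3b = (x1 - x2e) + (x2e - x3g)"
  proof (rule yb_identity_x3[where P = "X1 * X2" and PB = "X1 * X3a" and PG = "X2e * X3f"
        and d = "x3 - x2" and dF = "x3 - x1e" and \<alpha> = "a1 - a2" and \<beta> = "a2 - a3"])
    show "x3 - x1e = x3 - x2 + (a1 - a2) + (x1 - x2e)"
      using companion_step_gap[OF E] by Groebner_Basis.algebra
    show "X1 * X3a * (x3 - x2) = X1 * X2 * (x3 - x2 - (a2 - a3))"
      using companion_step_snd[OF A] companion_step_gap[OF A] by Groebner_Basis.algebra
    show "(x1 - x3b) * (X1 * X3a - 1) = a1 - a2 + (a2 - a3)"
      using companion_step_shift[OF B] by simp
    show "X2e * X3f * (x3 - x1e) = X1 * X2 * (x3 - x1e - (a1 - a2 + (a2 - a3)))"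
      using companion_step_snd[OF F] companion_step_gap[OF F] companion_step_product[OF E]
      by Groebner_Basis.algebra
  qed (use companion_step_shift[OF E] companion_step_shift[OF G] companion_step_nonzero[OF A]
      companion_step_nonzero[OF B] in auto)
  then show ?thesis by simp
qed

lemma yang_baxter_x1: "x1c = x1f"
proof -
  have "(x2 - x3a) + (x1b - x2c) = x1e - x3f"
  proof (rule yb_identity_x1[where Q = "X2 * X3" and PC = "X1b * X2a" and PF = "X1e * X3"
        and d = "x2 - x1" and \<alpha> = "a1 - a2" and \<beta> = "a2 - a3"])
    show "X1b * X2a * (x2 - x1 - (x2 - x3a) - (a1 - a2 + (a2 - a3))) = X2 * X3 * (x2 - x1 - (x2 - x3a))"
      using companion_step_fst[OF B] companion_step_gap[OF B] companion_step_product[OF A]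
      by Groebner_Basis.algebra
    show "X1e * X3 * (x2 - x1 - (a1 - a2)) = X2 * X3 * (x2 - x1)"
      using companion_step_fst[OF E] companion_step_gap[OF E] by Groebner_Basis.algebra
    show "(x1e - x3f) * (X1e * X3 - 1) = a1 - a2 + (a2 - a3)"
      using companion_step_shift[OF F] by simp
    show "x2 - x1 - (a1 - a2) \<noteq> 0"
      using companion_step_gap[OF E] companion_step_nonzero[OF E] by simp
  qed (use companion_step_shift[OF A] companion_step_shift[OF C] companion_step_nonzero[OF F] in auto)
  then show ?thesis
    using companion_step_gap[OF A] companion_step_gap[OF C] companion_step_gap[OF F]
    by Groebner_Basis.algebra
qed

lemma yang_baxter_x2: "x2c = x2g"
  using companion_step_gap[OF A] companion_step_gap[OF B]
    companion_step_gap[OF C, unfolded yang_baxter_x1] companion_step_gap[OF E] companion_step_gap[OF F]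
    companion_step_gap[OF G, folded yang_baxter_x3]
  by Groebner_Basis.algebra

lemma yang_baxter_X3: "X3b = X3g"
proof -
  have "(x2 - x1 - (x2 - x3a) - (a1 - a2 + (a2 - a3))) * (x2 - x1) * (x2 - x1 - (a1 - a2) - (x1e - x3f)) =
      (x2 - x1 - (x2 - x3a)) * (x2 - x1 - (a1 - a2)) * (x2 - x1 - (a1 - a2) - (x1e - x3f) - (a2 - a3))"
  proof (rule yb_identity_X3[where Q = "X2 * X3" and PF = "X1e * X3"])
    show "X1e * X3 * (x2 - x1 - (a1 - a2)) = X2 * X3 * (x2 - x1)"
      using companion_step_fst[OF E] companion_step_gap[OF E] by Groebner_Basis.algebra
    show "(x1e - x3f) * (X1e * X3 - 1) = a1 - a2 + (a2 - a3)"
      using companion_step_shift[OF F] by simp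
    show "x2 - x1 - (a1 - a2) \<noteq> 0"
      using companion_step_gap[OF E] companion_step_nonzero[OF E] by simp
  qed (use companion_step_shift[OF A] companion_step_nonzero[OF A] companion_step_nonzero[OF F] in auto)
  then have "(x1b - x3b) * (x2 - x1) * (x3f - x2e) = (x3a - x1) * (x1e - x2e) * (x2g - x3g)"
    using companion_step_gap[OF B] companion_step_gap[OF E] companion_step_gap[OF G]
    by Groebner_Basis.algebra
  then have "(x3a - x1) * (x2 - x1) * (x3f - x2e) * X3b = (x3a - x1) * (x2 - x1) * (x3f - x2e) * X3g"
    using companion_step_snd[OF B] companion_step_snd[OF G] companion_step_snd[OF E]
    by Groebner_Basis.algebra
  then show ?thesis
    using companion_step_nonzero[OF B] companion_step_nonzero[OF G] companion_step_nonzero[OF E]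
    by simp
qed

lemma yang_baxter_X1: "X1c = X1f"
proof -
  have "(x3 - x2) * (x3 - x2 + (a1 - a2) + (x1 - x3b)) * (x3 - x2 + (x1 - x2e) - (a2 - a3)) =
      (x3 - x2 + (a1 - a2) + (x1 - x2e)) * (x3 - x2 - (a2 - a3)) * (x3 - x2 + (x1 - x3b))"
  proof (rule yb_identity_X1[where P = "X1 * X2" and PB = "X1 * X3a"])
    show "X1 * X3a * (x3 - x2) = X1 * X2 * (x3 - x2 - (a2 - a3))"
      using companion_step_snd[OF A] companion_step_gap[OF A] by Groebner_Basis.algebra
    show "(x1 - x3b) * (X1 * X3a - 1) = a1 - a2 + (a2 - a3)"
      using companion_step_shift[OF B] by simp
  qed (use companion_step_shift[OF E] companion_step_nonzero[OF E] companion_step_nonzero[OF B]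
      companion_step_nonzero[OF A] in auto)
  then have "(x3 - x2) * (x2a - x1b) * (x1f - x3f) = (x3 - x1e) * (x2a - x3a) * (x1c - x2c)"
    using companion_step_gap[OF A] companion_step_gap[OF B] companion_step_gap[OF C]
      companion_step_gap[OF E] companion_step_gap[OF F]
    by Groebner_Basis.algebra
  then have "(x1c - x2c) * (x2a - x3a) * (x1f - x3f) * X1c = (x1c - x2c) * (x2a - x3a) * (x1f - x3f) * X1f"
    using companion_step_fst[OF C] companion_step_fst[OF A] companion_step_fst[OF F]
    by Groebner_Basis.algebra
  then show ?thesis
    using companion_step_nonzero[OF C] companion_step_nonzero[OF A] companion_step_nonzero[OF F]
    by simp
qed

lemma yang_baxter_X2: "X2c = X2g"
proof -
  have "X1c * X3b * X2c = X1 * X2 * X3"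
    using companion_step_product[OF A] companion_step_product[OF B] companion_step_product[OF C]
    by Groebner_Basis.algebra
  moreover have "X1f * X3g * X2g = X1 * X2 * X3"
    using companion_step_product[OF E] companion_step_product[OF F] companion_step_product[OF G]
    by Groebner_Basis.algebra
  ultimately have "X1c * X3b * X2c = X1c * X3b * X2g"
    by (simp add: yang_baxter_X1 yang_baxter_X3)
  then show ?thesis
    using companion_step_nonzero[OF B] companion_step_nonzero[OF C] by simp
qed

lemma yang_baxter_companion_steps:
  "((x1c, X1c), (x2c, X2c), (x3b, X3b)) = ((x1f, X1f), (x2g, X2g), (x3g, X3g))"
  by (simp add: yang_baxter_x1 yang_baxter_x2 yang_baxter_x3 yang_baxter_X1 yang_baxter_X2
      yang_baxter_X3)

end

theorem yang_baxter_Rc: "yang_baxter Rc Rc_generic"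
  unfolding yang_baxter_def
proof (intro allI impI, elim conjE)
  fix a1 a2 a3 :: complex and z :: "(complex \<times> complex) \<times> (complex \<times> complex) \<times> (complex \<times> complex)"
  assume H: "ok23 Rc_generic a1 a2 a3 z" "ok13 Rc_generic a1 a2 a3 (R23 Rc a1 a2 a3 z)"
    "ok12 Rc_generic a1 a2 a3 (R13 Rc a1 a2 a3 (R23 Rc a1 a2 a3 z))" "ok12 Rc_generic a1 a2 a3 z"
    "ok13 Rc_generic a1 a2 a3 (R12 Rc a1 a2 a3 z)"
    "ok23 Rc_generic a1 a2 a3 (R13 Rc a1 a2 a3 (R12 Rc a1 a2 a3 z))"
  obtain x1 X1 x2 X2 x3 X3 where z: "z = ((x1, X1), (x2, X2), (x3, X3))" by (metis prod.exhaust)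
  obtain x2a X2a x3a X3a where RA: "Rc a2 a3 (x2, X2) (x3, X3) = ((x2a, X2a), (x3a, X3a))"
    by (metis prod.exhaust)
  obtain x1b X1b x3b X3b where RB: "Rc a1 a3 (x1, X1) (x3a, X3a) = ((x1b, X1b), (x3b, X3b))"
    by (metis prod.exhaust)
  obtain x1c X1c x2c X2c where RC: "Rc a1 a2 (x1b, X1b) (x2a, X2a) = ((x1c, X1c), (x2c, X2c))"
    by (metis prod.exhaust)
  obtain x1e X1e x2e X2e where RE: "Rc a1 a2 (x1, X1) (x2, X2) = ((x1e, X1e), (x2e, X2e))"
    by (metis prod.exhaust)
  obtain x1f X1f x3f X3f where RF: "Rc a1 a3 (x1e, X1e) (x3, X3) = ((x1f, X1f), (x3f, X3f))"
    by (metis prod.exhaust)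
  obtain x2g X2g x3g X3g where RG: "Rc a2 a3 (x2e, X2e) (x3f, X3f) = ((x2g, X2g), (x3g, X3g))"
    by (metis prod.exhaust)
  have "companion_step a2 a3 x2 X2 x3 X3 x2a X2a x3a X3a"
    using H(1) RA by (intro Rc_companion_step) (simp_all add: z ok23_def)
  moreover have "companion_step a1 a3 x1 X1 x3a X3a x1b X1b x3b X3b"
    using H(2) RA RB by (intro Rc_companion_step) (simp_all add: z ok13_def R23_def)
  moreover have "companion_step a1 a2 x1b X1b x2a X2a x1c X1c x2c X2c"
    using H(3) RA RB RC by (intro Rc_companion_step) (simp_all add: z ok12_def R13_def R23_def)
  moreover have "companion_step a1 a2 x1 X1 x2 X2 x1e X1e x2e X2e"
    using H(4) RE by (intro Rc_companion_step) (simp_all add: z ok12_def)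
  moreover have "companion_step a1 a3 x1e X1e x3 X3 x1f X1f x3f X3f"
    using H(5) RE RF by (intro Rc_companion_step) (simp_all add: z ok13_def R12_def)
  moreover have "companion_step a2 a3 x2e X2e x3f X3f x2g X2g x3g X3g"
    using H(6) RE RF RG by (intro Rc_companion_step) (simp_all add: z ok23_def R13_def R12_def)
  ultimately have "((x1c, X1c), (x2c, X2c), (x3b, X3b)) = ((x1f, X1f), (x2g, X2g), (x3g, X3g))"
    by (rule yang_baxter_companion_steps)
  then show "R12 Rc a1 a2 a3 (R13 Rc a1 a2 a3 (R23 Rc a1 a2 a3 z)) =
      R23 Rc a1 a2 a3 (R13 Rc a1 a2 a3 (R12 Rc a1 a2 a3 z))"
    by (simp add: z R12_def R13_def R23_def RA RB RC RE RF RG)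
qed

theorem proposition3p1:
  fixes p q :: complex
  shows
    \<comment> \<open>(1)\<close>
    "(\<forall>u s v t u2 s2 v1 t1.
        mH1_generic u s v t \<and> (u2, s2, v1, t1) = mH1 p q u s v t \<longrightarrow>
          (t1 \<noteq> 0 \<longrightarrow> s2 / t1 = s / t) \<and>
          u2 - v1 + (p - q) / 2 = - (u - v + (p - q) / 2))
     \<and>
    \<comment> \<open>(2)\<close>
     (\<forall>u s v t u2 s2 v1 t1.
        mH1_generic u s v t \<and> (u2, s2, v1, t1) = mH1 p q u s v t \<and> t1 \<noteq> 0 \<longrightarrow>
          (t * u = s * v \<longleftrightarrow> u2 * s2 = t1 * v1))
     \<and>
    \<comment> \<open>(3): the multi-dimensional extension for i=1,j=2 is the system, and it is compatible\<close>
     (\<forall>u s v t. mH1 p q u s v t =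
        (shiftX (\<lambda>a. if a = 1 then u else v) (\<lambda>a. if a = 1 then s else t) (\<lambda>a. if a = 1 then p else q) 1 2,
         shiftY (\<lambda>a. if a = 1 then u else v) (\<lambda>a. if a = 1 then s else t) (\<lambda>a. if a = 1 then p else q) 1 2,
         shiftX (\<lambda>a. if a = 1 then u else v) (\<lambda>a. if a = 1 then s else t) (\<lambda>a. if a = 1 then p else q) 2 1,
         shiftY (\<lambda>a. if a = 1 then u else v) (\<lambda>a. if a = 1 then s else t) (\<lambda>a. if a = 1 then p else q) 2 1))
     \<and>
     (\<forall>(n::nat) X Y P i j k.
        i \<in> {1..n} \<and> j \<in> {1..n} \<and> k \<in> {1..n} \<and> i \<noteq> j \<and> i \<noteq> k \<and> j \<noteq> k \<and>
        cube_generic X Y P i j k \<longrightarrow>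
          Xjk X Y P i j k = Xjk X Y P i k j \<and> Yjk X Y P i j k = Yjk X Y P i k j)
     \<and>
    \<comment> \<open>(4)\<close>
     (\<forall>u s v t u2 s2 v1 t1.
        mH1_generic u s v t \<longrightarrow>
          ((\<forall>lam. Lax u2 s2 p lam * Lax v t q lam = Lax v1 t1 q lam * Lax u s p lam)
           \<longleftrightarrow> (u2, s2, v1, t1) = mH1 p q u s v t))
     \<and>
    \<comment> \<open>(5a): the companion map is the solution of the system for (u2,s2,v,t)\<close>
     (\<forall>u s v1 t1 u2 s2 v t.
        companion_generic p q u s v1 t1 \<longrightarrow>
          ((mH1_generic u s v t \<and> (u2, s2, v1, t1) = mH1 p q u s v t)
           \<longleftrightarrow> (u2, s2, v, t) = companion p q u s v1 t1))
     \<and>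
    \<comment> \<open>(5b)\<close>
     yang_baxter Rc Rc_generic"
proof (intro conjI allI impI; (elim conjE)?)
  fix u s v t u2 s2 v1 t1
  assume gen: "mH1_generic u s v t" and "(u2, s2, v1, t1) = mH1 p q u s v t"
  then have rel: "mH1_rel p q u s v t u2 s2 v1 t1" by (simp add: mH1_eq_iff_rel)
  have "s \<noteq> 0" "t \<noteq> 0" using gen by (simp_all add: mH1_generic_def)
  show "u2 - v1 + (p - q) / 2 = - (u - v + (p - q) / 2)" using rel by (rule mH1_rel_sum)
  show "s2 / t1 = s / t" if "t1 \<noteq> 0" using mH1_rel_ratio[OF rel \<open>t \<noteq> 0\<close> that] .
  show "t * u = s * v \<longleftrightarrow> u2 * s2 = t1 * v1" if "t1 \<noteq> 0"
    using mH1_rel_constraint_iff[OF rel \<open>s \<noteq> 0\<close> \<open>t \<noteq> 0\<close> that] .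
next
  fix u s v t u2 s2 v1 t1
  assume "mH1_generic u s v t"
  then show "(\<forall>lam. Lax u2 s2 p lam * Lax v t q lam = Lax v1 t1 q lam * Lax u s p lam)
      \<longleftrightarrow> (u2, s2, v1, t1) = mH1 p q u s v t"
    by (simp add: mH1_eq_iff_rel Lax_commute_iff_mH1_rel mH1_generic_def)
qed (metis mH1_as_shifts Xjk_commute Yjk_commute companion_iff_mH1 yang_baxter_Rc)+

end
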